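(* Let $\alpha>0$, $\beta>0$, and for $R>0$ let $\kappa_0=\kappa_0(R)>0$ be the unique solution of $K_0(\kappa R)I_0(\kappa R)=\frac{1}{(\alpha+\beta)R}$ and $$t_0(R):=\frac{2\kappa_0 I_0K_0\left(-\alpha\beta R\,I_0K_0+\alpha\kappa_0R\,(I_0K_0)'+\alpha\,I_0K_0\right)}{R\,(I_0K_0)'},$$ with $I_0K_0$ and $(I_0K_0)'$ the values of $z\mapsto I_0(z)K_0(z)$ and of its derivative at $z=R\kappa_0$. Then $t_0(R)<0$ for all sufficiently small $R>0$, and $t_0(R)>0$ for all sufficiently large $R$. In particular, the sign of the first-order correction for approaching circles is not determined in general. *)

theory Defs
  imports "HOL-Analysis.Analysis"
begin

definition besselI0 :: "real \<Rightarrow> real" where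
  "besselI0 z = (\<Sum>k. (z / 2) ^ (2 * k) / (fact k)\<^sup>2)"

text \<open>Modified Bessel function of the second kind of order 0, for z > 0,
  via the integral representation K_0(z) = int_0^infty exp(-z cosh t) dt.\<close>
definition besselK0 :: "real \<Rightarrow> real" where
  "besselK0 z = (LINT t:{0..}|lborel. exp (- (z * cosh t)))"

definition kappa0 :: "real \<Rightarrow> real \<Rightarrow> real \<Rightarrow> real" where
  "kappa0 \<alpha> \<beta> R = (THE \<kappa>. \<kappa> > 0 \<and>
      besselK0 (\<kappa> * R) * besselI0 (\<kappa> * R) = 1 / ((\<alpha> + \<beta>) * R))"

definition IK0 :: "real \<Rightarrow> real" where
  "IK0 z = besselI0 z * besselK0 z"

definition t0 :: "real \<Rightarrow> real \<Rightarrow> real \<Rightarrow> real" where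
  "t0 \<alpha> \<beta> R =
     (let \<kappa> = kappa0 \<alpha> \<beta> R; z = R * \<kappa>; p = IK0 z; dp = deriv IK0 z in
      2 * \<kappa> * p * (- \<alpha> * \<beta> * R * p + \<alpha> * \<kappa> * R * dp + \<alpha> * p) / (R * dp))"

end

theory Submission
  imports Defs
begin

text \<open>Put z = R kappa_0 and p = I_0K_0(z) = 1/((alpha + beta) R). As (I_0K_0)' < 0, the sign of
  t_0 is opposite to that of p (1 - beta R) + z (I_0K_0)'(z). For large R both summands are
  negative. For small R the number p is large, hence z is small because I_0K_0 is decreasing, and
  the bound z (I_0K_0)'(z) \<ge> -I_0(z), which comes from z K_1(z) \<le> 1, keeps the second summand
  bounded while the first one grows like p. The needed facts about K_0 (K_0' = -K_1 and
  K_0 \<le> K_1 \<le> 1/z) are read off the integral representation, those about I_0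
  (I_0' = I_1 \<le> I_0 - 1/2) off the power series.\<close>

section \<open>The modified Bessel function I_0\<close>

definition besselI0_coeff :: "nat \<Rightarrow> real" where
  "besselI0_coeff k = 1 / (fact k)\<^sup>2"

definition besselI1 :: "real \<Rightarrow> real" where
  "besselI1 z = (z / 2) * (\<Sum>n. (z\<^sup>2 / 4) ^ n / (fact n * fact (Suc n)))"

lemma summable_besselI0_coeff: "summable (\<lambda>k. besselI0_coeff k * w ^ k)"
proof (rule summable_comparison_test[OF _ summable_exp[of "\<bar>w\<bar>"]])
  have "besselI0_coeff n \<le> inverse (fact n)" for n
    using fact_ge_1[of n, where 'a=real] by (simp add: besselI0_coeff_def power2_eq_square field_simps)
  then have "besselI0_coeff n * \<bar>w\<bar> ^ n \<le> inverse (fact n) * \<bar>w\<bar> ^ n" for n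
    by (simp add: mult_right_mono)
  moreover have "norm (besselI0_coeff n * w ^ n) = besselI0_coeff n * \<bar>w\<bar> ^ n" for n
    by (simp add: abs_mult power_abs besselI0_coeff_def)
  ultimately have "norm (besselI0_coeff n * w ^ n) \<le> inverse (fact n) * \<bar>w\<bar> ^ n" for n
    by simp
  then show "\<exists>N. \<forall>n\<ge>N. norm (besselI0_coeff n * w ^ n) \<le> inverse (fact n) * \<bar>w\<bar> ^ n"
    by blast
qed

lemma besselI0_power_series: "besselI0 z = (\<Sum>k. besselI0_coeff k * (z\<^sup>2 / 4) ^ k)"
proof -
  have "(z / 2) ^ (2 * k) / (fact k)\<^sup>2 = besselI0_coeff k * (z\<^sup>2 / 4) ^ k" for k
    by (simp add: besselI0_coeff_def power_mult power_divide)
  then show ?thesis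
    unfolding besselI0_def by simp
qed

lemma besselI0_sum_squares: "(\<lambda>k. ((z / 2) ^ k / fact k)\<^sup>2) sums besselI0 z"
proof -
  have square: "((z / 2) ^ k / fact k)\<^sup>2 = (z / 2) ^ (2 * k) / (fact k)\<^sup>2" for k
    by (simp only: power_divide[of "(z / 2) ^ k" "fact k"] power_mult[symmetric] mult.commute[of k])
  have coeff_term: "(z / 2) ^ (2 * k) / (fact k)\<^sup>2 = besselI0_coeff k * (z\<^sup>2 / 4) ^ k" for k
    by (simp add: besselI0_coeff_def power_mult power_divide)
  have "summable (\<lambda>k. (z / 2) ^ (2 * k) / (fact k)\<^sup>2)"
    unfolding coeff_term by (rule summable_besselI0_coeff)
  then show ?thesis
    unfolding square besselI0_def by (rule summable_sums)
qed

lemma diffs_besselI0_coeff: "diffs besselI0_coeff n = 1 / (fact n * fact (Suc n))"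
proof -
  have "(fact n :: real) > 0"
    by simp
  then show ?thesis
    by (simp add: diffs_def besselI0_coeff_def power2_eq_square divide_simps)
qed

lemma summable_besselI1_series: "summable (\<lambda>n. (w::real) ^ n / (fact n * fact (Suc n)))"
  using termdiff_converges_all[OF summable_besselI0_coeff] by (simp add: diffs_besselI0_coeff)

lemma has_real_derivative_besselI0: "(besselI0 has_real_derivative besselI1 z) (at z)"
proof -
  have "((\<lambda>w. \<Sum>n. besselI0_coeff n * w ^ n) has_real_derivative
          (\<Sum>n. diffs besselI0_coeff n * w ^ n)) (at w)" for w
    by (rule termdiffs_strong_converges_everywhere) (rule summable_besselI0_coeff)
  moreover have "((\<lambda>z. z\<^sup>2 / 4) has_real_derivative z / 2) (at z)"
    by (auto intro!: derivative_eq_intros)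
  ultimately have "((\<lambda>z. \<Sum>n. besselI0_coeff n * (z\<^sup>2 / 4) ^ n) has_real_derivative
          (\<Sum>n. diffs besselI0_coeff n * (z\<^sup>2 / 4) ^ n) * (z / 2)) (at z)"
    by (rule DERIV_chain2)
  then show ?thesis
    by (simp add: besselI0_power_series[abs_def] besselI1_def diffs_besselI0_coeff mult.commute)
qed

lemma besselI0_ge_1: "besselI0 z \<ge> 1"
proof -
  have tail: "(\<lambda>k. ((z / 2) ^ Suc k / fact (Suc k))\<^sup>2) sums (besselI0 z - 1)"
    using besselI0_sum_squares[of z] sums_Suc_iff[of "\<lambda>k. ((z / 2) ^ k / fact k)\<^sup>2"] by simp
  have "0 \<le> besselI0 z - 1"
    by (rule sums_le[OF _ sums_zero tail]) simp
  then show ?thesis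
    by simp
qed

lemma besselI0_mono:
  assumes "0 \<le> x" "x \<le> y"
  shows "besselI0 x \<le> besselI0 y"
  unfolding besselI0_power_series
proof (rule suminf_le[OF _ summable_besselI0_coeff summable_besselI0_coeff])
  fix n
  have "(x\<^sup>2 / 4) ^ n \<le> (y\<^sup>2 / 4) ^ n"
    using assms by (simp add: power_mono)
  then show "besselI0_coeff n * (x\<^sup>2 / 4) ^ n \<le> besselI0_coeff n * (y\<^sup>2 / 4) ^ n"
    by (simp add: besselI0_coeff_def divide_right_mono)
qed

text \<open>I_0(x) is the sum of the squares a_k^2 of the terms of the series of exp (x/2), and each
  a_k is at most exp (x/2).\<close>
lemma besselI0_le_exp:
  assumes "x \<ge> 0"
  shows "besselI0 x \<le> exp x"
proof -
  define a where "a k = (x / 2) ^ k / fact k" for k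
  have "(\<lambda>k. (x / 2) ^ k /\<^sub>R fact k) = a"
    by (rule ext) (simp add: a_def field_simps)
  then have a: "a sums exp (x / 2)"
    using exp_converges[of "x / 2"] by simp
  have a_nonneg: "0 \<le> a k" for k
    using assms by (simp add: a_def)
  have a_le: "a k \<le> exp (x / 2)" for k
    using sum_le_suminf[OF sums_summable[OF a], of "{k}"] a_nonneg sums_unique[OF a] by simp
  have "(\<lambda>k. (a k)\<^sup>2) sums besselI0 x"
    using besselI0_sum_squares unfolding a_def .
  moreover have "(\<lambda>k. exp (x / 2) * a k) sums (exp (x / 2) * exp (x / 2))"
    by (rule sums_mult[OF a])
  moreover have "(a k)\<^sup>2 \<le> exp (x / 2) * a k" for k
    using a_le a_nonneg by (simp add: power2_eq_square mult_right_mono)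
  ultimately have "besselI0 x \<le> exp (x / 2) * exp (x / 2)"
    by (rule sums_le[rotated])
  then show ?thesis
    by (simp add: mult_exp_exp)
qed

lemma besselI1_sum_products:
  "(\<lambda>n. (z / 2) ^ n / fact n * ((z / 2) ^ Suc n / fact (Suc n))) sums besselI1 z"
proof -
  define s where "s = z / 2"
  have "z\<^sup>2 / 4 = s\<^sup>2"
    by (simp add: s_def power_divide)
  moreover have "s * ((s\<^sup>2) ^ n / (fact n * fact (Suc n))) = s ^ n / fact n * (s ^ Suc n / fact (Suc n))" for n
    by (simp add: power_mult[symmetric] mult_2 power_add)
  ultimately show ?thesis
    using sums_mult[OF summable_sums[OF summable_besselI1_series[of "s\<^sup>2"]], of s]
    by (simp add: besselI1_def s_def)
qed

lemma besselI1_nonneg: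
  assumes "z \<ge> 0"
  shows "besselI1 z \<ge> 0"
  using sums_le[OF _ sums_zero besselI1_sum_products] assms by simp

text \<open>AM-GM on consecutive terms of the series of exp (z/2).\<close>
lemma besselI1_le_besselI0: "besselI1 z \<le> besselI0 z - 1 / 2"
proof -
  define a where "a k = (z / 2) ^ k / fact k" for k
  have squares: "(\<lambda>k. (a k)\<^sup>2) sums besselI0 z"
    using besselI0_sum_squares unfolding a_def .
  then have "(\<lambda>k. (a (Suc k))\<^sup>2) sums (besselI0 z - 1)"
    using sums_Suc_iff[of "\<lambda>k. (a k)\<^sup>2"] by (simp add: a_def)
  with squares have means: "(\<lambda>k. ((a k)\<^sup>2 + (a (Suc k))\<^sup>2) / 2) sums ((besselI0 z + (besselI0 z - 1)) / 2)"
    by (intro sums_divide sums_add)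
  have products: "(\<lambda>k. a k * a (Suc k)) sums besselI1 z"
    using besselI1_sum_products unfolding a_def .
  have "a k * a (Suc k) \<le> ((a k)\<^sup>2 + (a (Suc k))\<^sup>2) / 2" for k
    using sum_squares_bound[of "a k" "a (Suc k)"] by simp
  from sums_le[OF this products means] show ?thesis
    by simp
qed

section \<open>The integrals K_0 and K_1\<close>

text \<open>For k = 0 and k = 1 this is the integral representation of K_k; the case k = 2 only
  enters as the remainder term of the derivative of K_0.\<close>
definition besselK_integrand :: "nat \<Rightarrow> real \<Rightarrow> real \<Rightarrow> real" where
  "besselK_integrand k z t = indicator {0..} t * (cosh t ^ k * exp (- (z * cosh t)))"

definition besselK_moment :: "nat \<Rightarrow> real \<Rightarrow> real" where
  "besselK_moment k z = integral\<^sup>L lborel (besselK_integrand k z)"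

lemma besselK0_eq_moment: "besselK0 z = besselK_moment 0 z"
  by (simp add: besselK0_def besselK_moment_def besselK_integrand_def[abs_def] set_lebesgue_integral_def)

lemma borel_measurable_indicator_times_continuous:
  assumes "continuous_on UNIV (g :: real \<Rightarrow> real)" "A \<in> sets borel"
  shows "(\<lambda>t. indicator A t * g t) \<in> borel_measurable lborel"
  using borel_measurable_continuous_onI[OF assms(1)] assms(2) by (intro borel_measurable_times) auto

lemma borel_measurable_besselK_integrand: "besselK_integrand k z \<in> borel_measurable lborel"
  unfolding besselK_integrand_def
  by (rule borel_measurable_indicator_times_continuous) (auto intro!: continuous_intros)

text \<open>An integrable majorant: its integral is computed by the substitution u = sinh t.\<close>
definition exp_sinh_weight :: "real \<Rightarrow> real \<Rightarrow> real" where
  "exp_sinh_weight a t = indicator {0..} t * (cosh t * exp (- (a * sinh t)))"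

lemma borel_measurable_exp_sinh_weight: "exp_sinh_weight a \<in> borel_measurable lborel"
  unfolding exp_sinh_weight_def
  by (rule borel_measurable_indicator_times_continuous) (auto intro!: continuous_intros)

lemma exp_sinh_weight_nonneg: "exp_sinh_weight a t \<ge> 0"
  by (simp add: exp_sinh_weight_def)

lemma nn_integral_exp_sinh_weight:
  assumes a: "a > 0"
  shows "(\<integral>\<^sup>+t. ennreal (exp_sinh_weight a t) \<partial>lborel) = ennreal (1 / a)"
proof -
  have "filterlim (\<lambda>t. - (a * sinh t)) at_bot at_top"
    using a by (auto simp: filterlim_uminus_at_bot intro!: filterlim_tendsto_pos_mult_at_top sinh_real_at_top)
  then have "((\<lambda>t. exp (- (a * sinh t))) \<longlongrightarrow> 0) at_top"
    by (rule filterlim_compose[OF exp_at_bot])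
  from tendsto_divide[OF tendsto_minus[OF this] tendsto_const[of a]]
  have lim: "((\<lambda>t. - exp (- (a * sinh t)) / a) \<longlongrightarrow> 0) at_top"
    using a by simp
  have "(\<integral>\<^sup>+t. ennreal (exp_sinh_weight a t) \<partial>lborel) =
        (\<integral>\<^sup>+t. ennreal (cosh t * exp (- (a * sinh t))) * indicator {0..} t \<partial>lborel)"
    by (rule nn_integral_cong) (simp add: exp_sinh_weight_def split: split_indicator)
  also have "\<dots> = 0 - (- exp (- (a * sinh 0)) / a)"
    by (rule nn_integral_FTC_atLeast[OF _ _ _ lim])
       (use a in \<open>auto intro!: derivative_eq_intros borel_measurable_continuous_onI continuous_intros
                   simp: field_simps order_less_imp_le\<close>)
  finally show ?thesis
    by simp
qed

lemma integrable_exp_sinh_weight: "a > 0 \<Longrightarrow> integrable lborel (exp_sinh_weight a)"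
  using borel_measurable_exp_sinh_weight[of a]
  by (intro integrableI_nonneg) (auto simp: nn_integral_exp_sinh_weight exp_sinh_weight_nonneg)

lemma integral_exp_sinh_weight: "a > 0 \<Longrightarrow> integral\<^sup>L lborel (exp_sinh_weight a) = 1 / a"
  using borel_measurable_exp_sinh_weight[of a]
  by (subst integral_eq_nn_integral) (auto simp: nn_integral_exp_sinh_weight exp_sinh_weight_nonneg)

lemma mult_exp_neg_le:
  fixes a x :: real
  assumes "a > 0"
  shows "x * exp (- (a / 2 * x)) \<le> 2 / a"
proof -
  have "x \<le> 2 / a * exp (a / 2 * x)"
    using exp_ge_add_one_self[of "a / 2 * x"] assms by (simp add: field_simps)
  then have "x * exp (- (a / 2 * x)) \<le> 2 / a * exp (a / 2 * x) * exp (- (a / 2 * x))"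
    by (rule mult_right_mono) simp
  then show ?thesis
    by (simp add: exp_minus field_simps)
qed

lemma abs_besselK_integrand_le:
  assumes a: "a > 0" and k: "k \<le> 2"
  shows "\<bar>besselK_integrand k a t\<bar> \<le> 2 / a * exp_sinh_weight (a / 2) t"
proof (cases "t \<ge> 0")
  case True
  have c: "cosh t \<ge> 1"
    by (rule cosh_real_ge_1)
  have split: "exp (- (a * cosh t)) = exp (- (a / 2 * cosh t)) * exp (- (a / 2 * cosh t))"
    by (simp add: mult_exp_exp)
  have "cosh t ^ k * exp (- (a * cosh t)) \<le> cosh t ^ 2 * exp (- (a * cosh t))"
    using power_increasing[OF k c] by (simp add: mult_right_mono)
  also have "\<dots> = cosh t * (cosh t * exp (- (a / 2 * cosh t))) * exp (- (a / 2 * cosh t))"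
    by (simp add: split power2_eq_square mult_ac)
  also have "\<dots> \<le> cosh t * (2 / a) * exp (- (a / 2 * sinh t))"
  proof (rule mult_mono)
    show "cosh t * (cosh t * exp (- (a / 2 * cosh t))) \<le> cosh t * (2 / a)"
      using mult_exp_neg_le[OF a, of "cosh t"] c by (intro mult_left_mono) auto
    show "exp (- (a / 2 * cosh t)) \<le> exp (- (a / 2 * sinh t))"
      using a by (simp add: cosh_def sinh_def)
  qed (use a c in auto)
  finally show ?thesis
    using True by (simp add: besselK_integrand_def exp_sinh_weight_def abs_mult mult_ac)
qed (simp add: besselK_integrand_def exp_sinh_weight_def)

lemma integrable_besselK_integrand:
  assumes "a > 0" "k \<le> 2"
  shows "integrable lborel (besselK_integrand k a)"
proof (rule Bochner_Integration.integrable_bound[OF _ borel_measurable_besselK_integrand])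
  show "integrable lborel (\<lambda>t. 2 / a * exp_sinh_weight (a / 2) t)"
    using assms by (intro integrable_mult_right integrable_exp_sinh_weight) simp
  show "AE t in lborel. norm (besselK_integrand k a t) \<le> norm (2 / a * exp_sinh_weight (a / 2) t)"
    using abs_besselK_integrand_le[OF assms] assms by (auto simp: exp_sinh_weight_nonneg)
qed

lemma besselK_moment_0_ge:
  assumes z: "z > 0" and T: "T \<ge> 0"
  shows "T * exp (- (z * cosh T)) \<le> besselK_moment 0 z"
proof -
  have "T * exp (- (z * cosh T)) = integral\<^sup>L lborel (\<lambda>t. indicator {0..T} t * exp (- (z * cosh T)))"
    using T by simp
  also have "\<dots> \<le> besselK_moment 0 z"
    unfolding besselK_moment_def
  proof (rule integral_mono[OF _ integrable_besselK_integrand[OF z]])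
    show "integrable lborel (\<lambda>t. indicator {0..T} t * exp (- (z * cosh T)))"
      using T by (intro integrable_mult_left integrable_real_indicator) auto
    show "indicator {0..T} t * exp (- (z * cosh T)) \<le> besselK_integrand 0 z t" for t
      using z by (auto split: split_indicator simp: besselK_integrand_def cosh_real_nonneg_le_iff)
  qed simp
  finally show ?thesis .
qed

lemma besselK_moment_0_pos: "z > 0 \<Longrightarrow> besselK_moment 0 z > 0"
  using besselK_moment_0_ge[of z 1] exp_gt_zero[of "- (z * cosh 1)"] by linarith

lemma besselK_moment_0_le_1:
  assumes "z > 0"
  shows "besselK_moment 0 z \<le> besselK_moment 1 z"
  unfolding besselK_moment_def
  by (rule integral_mono[OF integrable_besselK_integrand integrable_besselK_integrand])
     (use assms in \<open>auto simp: besselK_integrand_def cosh_real_ge_1 split: split_indicator\<close>)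

lemma besselK_moment_1_le:
  assumes "z > 0"
  shows "besselK_moment 1 z \<le> 1 / z"
proof -
  have "besselK_moment 1 z \<le> integral\<^sup>L lborel (exp_sinh_weight z)"
    unfolding besselK_moment_def
    by (rule integral_mono[OF integrable_besselK_integrand integrable_exp_sinh_weight])
       (use assms in \<open>auto simp: besselK_integrand_def exp_sinh_weight_def cosh_def sinh_def
                         split: split_indicator intro!: mult_left_mono\<close>)
  then show ?thesis
    using integral_exp_sinh_weight[OF assms] by simp
qed

lemma abs_exp_minus_one_minus_le: "\<bar>exp x - 1 - x\<bar> \<le> x\<^sup>2 / 2 * exp \<bar>x\<bar>" for x :: real
proof -
  obtain t where t: "\<bar>t\<bar> \<le> \<bar>x\<bar>" "exp x = (\<Sum>m<2. x ^ m / fact m) + exp t / fact 2 * x ^ 2"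
    using Maclaurin_exp_le[of x 2] by blast
  then have "\<bar>exp x - 1 - x\<bar> = exp t / 2 * x\<^sup>2"
    by (simp add: numeral_2_eq_2)
  also have "\<dots> \<le> x\<^sup>2 / 2 * exp \<bar>x\<bar>"
    using t(1) by (simp add: mult_right_mono field_simps)
  finally show ?thesis .
qed

lemma exp_neg_mult_second_order:
  fixes z c h :: real
  assumes c: "c \<ge> 0" and h: "\<bar>h\<bar> \<le> z / 2"
  shows "\<bar>exp (- ((z + h) * c)) - exp (- (z * c)) + h * (c * exp (- (z * c)))\<bar>
           \<le> h\<^sup>2 / 2 * (c\<^sup>2 * exp (- (z / 2 * c)))"
proof -
  have hc: "\<bar>- (h * c)\<bar> \<le> z / 2 * c"
    using mult_right_mono[OF h c] c by (simp add: abs_mult)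
  have "exp (- ((z + h) * c)) - exp (- (z * c)) + h * (c * exp (- (z * c)))
        = exp (- (z * c)) * (exp (- (h * c)) - 1 - (- (h * c)))"
    by (simp add: algebra_simps flip: exp_add)
  then have "\<bar>exp (- ((z + h) * c)) - exp (- (z * c)) + h * (c * exp (- (z * c)))\<bar>
        = exp (- (z * c)) * \<bar>exp (- (h * c)) - 1 - (- (h * c))\<bar>"
    by (simp add: abs_mult)
  also have "\<dots> \<le> exp (- (z * c)) * ((- (h * c))\<^sup>2 / 2 * exp \<bar>- (h * c)\<bar>)"
    by (rule mult_left_mono[OF abs_exp_minus_one_minus_le]) simp
  also have "\<dots> \<le> exp (- (z * c)) * ((- (h * c))\<^sup>2 / 2 * exp (z / 2 * c))"
    using hc by (intro mult_left_mono) auto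
  also have "\<dots> = h\<^sup>2 / 2 * (c\<^sup>2 * (exp (- (z * c)) * exp (z / 2 * c)))"
    by (simp add: power2_eq_square)
  also have "exp (- (z * c)) * exp (z / 2 * c) = exp (- (z / 2 * c))"
    by (simp flip: exp_add)
  finally show ?thesis .
qed

lemma besselK_moment_0_second_order:
  assumes z: "z > 0" and h: "\<bar>h\<bar> \<le> z / 2"
  shows "\<bar>besselK_moment 0 (z + h) - besselK_moment 0 z + h * besselK_moment 1 z\<bar>
           \<le> h\<^sup>2 / 2 * besselK_moment 2 (z / 2)"
proof -
  let ?f = "\<lambda>t. besselK_integrand 0 (z + h) t - besselK_integrand 0 z t + h * besselK_integrand 1 z t"
  have zh: "z + h > 0"
    using z h by linarith
  note integrable = integrable_besselK_integrand[OF zh, of 0] integrable_besselK_integrand[OF z, of 0]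
    integrable_besselK_integrand[OF z, of 1]
  have "integrable lborel ?f"
    using integrable by (intro Bochner_Integration.integrable_add Bochner_Integration.integrable_diff integrable_mult_right) auto
  moreover have "integrable lborel (\<lambda>t. h\<^sup>2 / 2 * besselK_integrand 2 (z / 2) t)"
    using z by (intro integrable_mult_right integrable_besselK_integrand) auto
  moreover have "norm (?f t) \<le> h\<^sup>2 / 2 * besselK_integrand 2 (z / 2) t" for t
    using exp_neg_mult_second_order[OF _ h, of "cosh t"] cosh_real_ge_1[of t]
    by (simp add: besselK_integrand_def split: split_indicator)
  ultimately have "norm (integral\<^sup>L lborel ?f) \<le> integral\<^sup>L lborel (\<lambda>t. h\<^sup>2 / 2 * besselK_integrand 2 (z / 2) t)"
    by (rule Bochner_Integration.integral_norm_bound_integral)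
  moreover have "integral\<^sup>L lborel ?f = besselK_moment 0 (z + h) - besselK_moment 0 z + h * besselK_moment 1 z"
    using integrable by (simp add: besselK_moment_def)
  ultimately show ?thesis
    by (simp add: besselK_moment_def)
qed

lemma besselK_moment_0_difference_quotient:
  assumes z: "z > 0" and w: "w \<noteq> z" "\<bar>w - z\<bar> \<le> z / 2"
  shows "\<bar>(besselK_moment 0 w - besselK_moment 0 z) / (w - z) + besselK_moment 1 z\<bar>
           \<le> \<bar>w - z\<bar> * (besselK_moment 2 (z / 2) / 2)"
proof -
  define h where "h = w - z"
  have h: "h \<noteq> 0" "\<bar>h\<bar> \<le> z / 2"
    using w by (simp_all add: h_def)
  have w_eq: "w = z + h"
    by (simp add: h_def)
  have "(besselK_moment 0 w - besselK_moment 0 z) / (w - z) + besselK_moment 1 z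
        = (besselK_moment 0 (z + h) - besselK_moment 0 z + h * besselK_moment 1 z) / h"
    using h(1) unfolding w_eq by (simp add: field_simps)
  then have "\<bar>(besselK_moment 0 w - besselK_moment 0 z) / (w - z) + besselK_moment 1 z\<bar>
        = \<bar>besselK_moment 0 (z + h) - besselK_moment 0 z + h * besselK_moment 1 z\<bar> / \<bar>h\<bar>"
    by (simp add: abs_divide)
  also have "\<dots> \<le> h\<^sup>2 / 2 * besselK_moment 2 (z / 2) / \<bar>h\<bar>"
    by (rule divide_right_mono[OF besselK_moment_0_second_order[OF z h(2)]]) simp
  also have "\<bar>h\<bar> * \<bar>h\<bar> / 2 * besselK_moment 2 (z / 2) / \<bar>h\<bar> = \<bar>h\<bar> * (besselK_moment 2 (z / 2) / 2)"
    using h(1) by (simp add: field_simps)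
  then have "h\<^sup>2 / 2 * besselK_moment 2 (z / 2) / \<bar>h\<bar> = \<bar>h\<bar> * (besselK_moment 2 (z / 2) / 2)"
    by (simp only: power2_eq_square abs_mult_self_eq)
  finally show ?thesis
    by (simp add: h_def)
qed

lemma has_real_derivative_besselK_moment_0:
  assumes z: "z > 0"
  shows "(besselK_moment 0 has_real_derivative - besselK_moment 1 z) (at z)"
  unfolding has_field_derivative_iff
proof (rule LIM_zero_cancel, rule Lim_null_comparison)
  show "\<forall>\<^sub>F w in at z. norm ((besselK_moment 0 w - besselK_moment 0 z) / (w - z) - - besselK_moment 1 z)
          \<le> \<bar>w - z\<bar> * (besselK_moment 2 (z / 2) / 2)"
    unfolding eventually_at using z besselK_moment_0_difference_quotient[OF z]
    by (intro exI[of _ "z / 2"]) (auto simp: dist_real_def)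
  show "((\<lambda>w. \<bar>w - z\<bar> * (besselK_moment 2 (z / 2) / 2)) \<longlongrightarrow> 0) (at z)"
    by (auto intro!: tendsto_eq_intros)
qed

section \<open>The product I_0 K_0\<close>

lemma IK0_eq: "IK0 z = besselI0 z * besselK_moment 0 z"
  by (simp add: IK0_def besselK0_eq_moment)

lemma has_real_derivative_IK0:
  assumes "z > 0"
  shows "(IK0 has_real_derivative besselI1 z * besselK_moment 0 z - besselI0 z * besselK_moment 1 z) (at z)"
  using DERIV_mult[OF has_real_derivative_besselI0 has_real_derivative_besselK_moment_0[OF assms]]
  by (simp add: IK0_eq[abs_def] algebra_simps)

lemma deriv_IK0:
  "z > 0 \<Longrightarrow> deriv IK0 z = besselI1 z * besselK_moment 0 z - besselI0 z * besselK_moment 1 z"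
  by (rule DERIV_imp_deriv[OF has_real_derivative_IK0])

lemma deriv_IK0_neg:
  assumes z: "z > 0"
  shows "deriv IK0 z < 0"
proof -
  have K0: "besselK_moment 0 z > 0"
    using besselK_moment_0_pos[OF z] .
  have "besselI1 z * besselK_moment 0 z \<le> (besselI0 z - 1 / 2) * besselK_moment 0 z"
    using besselI1_le_besselI0 K0 by (intro mult_right_mono) auto
  also have "\<dots> < besselI0 z * besselK_moment 0 z"
    using K0 by (simp add: algebra_simps)
  also have "\<dots> \<le> besselI0 z * besselK_moment 1 z"
    using besselK_moment_0_le_1[OF z] besselI0_ge_1[of z] by (intro mult_left_mono) auto
  finally show ?thesis
    using deriv_IK0[OF z] by simp
qed

lemma deriv_IK0_ge:
  assumes z: "z > 0"
  shows "z * deriv IK0 z \<ge> - besselI0 z"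
proof -
  have "z * (besselI1 z * besselK_moment 0 z) \<ge> 0"
    using besselI1_nonneg[of z] besselK_moment_0_pos[OF z] z by simp
  moreover have "z * besselK_moment 1 z \<le> 1"
    using besselK_moment_1_le[OF z] z by (simp add: field_simps)
  then have "besselI0 z * (z * besselK_moment 1 z) \<le> besselI0 z"
    using besselI0_ge_1[of z] mult_left_mono[of "z * besselK_moment 1 z" 1 "besselI0 z"] by simp
  moreover have "z * deriv IK0 z = z * (besselI1 z * besselK_moment 0 z) - besselI0 z * (z * besselK_moment 1 z)"
    unfolding deriv_IK0[OF z] by (simp only: algebra_simps)
  ultimately show ?thesis
    by linarith
qed

lemma IK0_strict_antimono:
  assumes "0 < x" "x < y"
  shows "IK0 y < IK0 x"
proof (rule DERIV_neg_imp_decreasing[OF assms(2)])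
  fix t
  assume "x \<le> t" "t \<le> y"
  then have t: "t > 0"
    using assms by linarith
  show "\<exists>d. DERIV IK0 t :> d \<and> d < 0"
    using has_real_derivative_IK0[OF t] deriv_IK0_neg[OF t] deriv_IK0[OF t] by metis
qed

lemma IK0_inj: "0 < x \<Longrightarrow> 0 < y \<Longrightarrow> IK0 x = IK0 y \<Longrightarrow> x = y"
  by (cases x y rule: linorder_cases) (auto dest: IK0_strict_antimono)

lemma continuous_on_IK0: "0 < a \<Longrightarrow> continuous_on {a..b} IK0"
  by (intro continuous_at_imp_continuous_on ballI DERIV_isCont[OF has_real_derivative_IK0]) auto

lemma IK0_unbounded:
  assumes "y > 0"
  shows "\<exists>a>0. IK0 a > y"
proof -
  define T where "T = exp 1 * y + 1"
  define a where "a = 1 / cosh T"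
  have a: "a > 0" and aT: "a * cosh T = 1" and T: "T \<ge> 0"
    using assms by (simp_all add: a_def T_def)
  have "y < T * exp (- 1)"
    by (simp add: T_def exp_minus field_simps)
  also have "\<dots> \<le> besselK_moment 0 a"
    using besselK_moment_0_ge[OF a T] by (simp add: aT)
  also have "\<dots> \<le> IK0 a"
    using besselI0_ge_1[of a] besselK_moment_0_pos[OF a]
      mult_right_mono[of 1 "besselI0 a" "besselK_moment 0 a"]
    by (simp add: IK0_eq)
  finally show ?thesis
    using a by blast
qed

lemma indicator_times_exp_neg_cosh_tendsto_0:
  fixes t :: real
  assumes "t \<noteq> 0"
  shows "((\<lambda>r. indicator {0..} t * exp (- ((cosh t - 1) * r))) \<longlongrightarrow> 0) at_top"
proof (cases "t > 0")
  case True
  then have "cosh t - 1 > 0"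
    using cosh_real_strict_mono[of 0 t] by simp
  then have "filterlim (\<lambda>r. - ((cosh t - 1) * r)) at_bot at_top"
    by (auto simp: filterlim_uminus_at_bot intro!: filterlim_tendsto_pos_mult_at_top filterlim_ident)
  from filterlim_compose[OF exp_at_bot this] True show ?thesis
    by simp
qed (use assms in simp)

text \<open>exp r K_0(r) is the integral of exp (- r (cosh t - 1)) over t \<ge> 0, which tends to zero by
  dominated convergence.\<close>
lemma exp_mult_besselK_moment_0_tendsto_0: "((\<lambda>r. exp r * besselK_moment 0 r) \<longlongrightarrow> 0) at_top"
proof -
  define s where "s r t = indicator {0..} t * exp (- ((cosh t - 1) * r))" for r t :: real
  have eq: "exp r * besselK_moment 0 r = integral\<^sup>L lborel (s r)" for r
  proof -
    have "exp r * besselK_moment 0 r = integral\<^sup>L lborel (\<lambda>t. exp r * besselK_integrand 0 r t)"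
      by (simp add: besselK_moment_def)
    also have "\<dots> = integral\<^sup>L lborel (s r)"
      by (rule Bochner_Integration.integral_cong)
         (simp_all add: besselK_integrand_def s_def algebra_simps flip: exp_add)
    finally show ?thesis .
  qed
  have s_measurable: "s r \<in> borel_measurable lborel" for r
    unfolding s_def by (rule borel_measurable_indicator_times_continuous) (auto intro!: continuous_intros)
  have majorant: "integrable lborel (\<lambda>t. exp 1 * besselK_integrand 0 1 t)"
    by (intro integrable_mult_right integrable_besselK_integrand) auto
  have "AE t in lborel. ((\<lambda>r. s r t) \<longlongrightarrow> 0) at_top"
    using AE_lborel_singleton[of 0]
    by eventually_elim (auto simp: s_def intro: indicator_times_exp_neg_cosh_tendsto_0)
  moreover have "\<forall>\<^sub>F r in at_top. AE t in lborel. norm (s r t) \<le> exp 1 * besselK_integrand 0 1 t"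
    unfolding eventually_at_top_linorder
  proof (intro exI[of _ 1] allI impI AE_I2)
    fix r t :: real
    assume r: "1 \<le> r"
    have "(cosh t - 1) * 1 \<le> (cosh t - 1) * r"
      using cosh_real_ge_1[of t] by (intro mult_left_mono[OF r]) simp
    then show "norm (s r t) \<le> exp 1 * besselK_integrand 0 1 t"
      by (auto simp: s_def besselK_integrand_def split: split_indicator simp flip: exp_add)
  qed
  ultimately have "((\<lambda>r. integral\<^sup>L lborel (s r)) \<longlongrightarrow> integral\<^sup>L lborel (\<lambda>t::real. 0::real)) at_top"
    by (intro integral_dominated_convergence_at_top[OF _ s_measurable majorant]) auto
  then show ?thesis
    by (simp add: eq)
qed

lemma IK0_arbitrarily_small:
  assumes "y > 0"
  shows "\<exists>b>0. IK0 b < y"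
proof -
  have "\<forall>\<^sub>F r in at_top. r > 0 \<and> exp r * besselK_moment 0 r < y"
    using eventually_gt_at_top[of 0] order_tendstoD(2)[OF exp_mult_besselK_moment_0_tendsto_0 assms]
    by eventually_elim auto
  then obtain b where b: "b > 0" "exp b * besselK_moment 0 b < y"
    using eventually_happens'[OF trivial_limit_at_top_linorder] by blast
  have "IK0 b \<le> exp b * besselK_moment 0 b"
    unfolding IK0_eq using besselI0_le_exp[of b] besselK_moment_0_pos[OF b(1)] b(1)
    by (intro mult_right_mono) auto
  then show ?thesis
    using b by (intro exI[of _ b]) auto
qed

lemma IK0_surj:
  assumes y: "y > 0"
  shows "\<exists>z>0. IK0 z = y"
proof -
  obtain a where a: "a > 0" "IK0 a > y"
    using IK0_unbounded[OF y] by blast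
  obtain b where b: "b > 0" "IK0 b < y"
    using IK0_arbitrarily_small[OF y] by blast
  have "a \<le> b"
    using IK0_strict_antimono[OF b(1), of a] a b by force
  then obtain x where "a \<le> x" "IK0 x = y"
    using IVT2'[of IK0 b y a, OF _ _ _ continuous_on_IK0[OF a(1)]] a b by auto
  then show ?thesis
    using a by (intro exI[of _ x]) auto
qed

lemma
  assumes "\<alpha> + \<beta> > 0" and R: "R > 0"
  shows kappa0_pos: "kappa0 \<alpha> \<beta> R > 0"
    and IK0_kappa0: "IK0 (R * kappa0 \<alpha> \<beta> R) = 1 / ((\<alpha> + \<beta>) * R)"
proof -
  define y where "y = 1 / ((\<alpha> + \<beta>) * R)"
  obtain z where z: "z > 0" "IK0 z = y"
    using IK0_surj[of y] assms by (auto simp: y_def)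
  have equation: "(\<kappa> > 0 \<and> besselK0 (\<kappa> * R) * besselI0 (\<kappa> * R) = y) \<longleftrightarrow> (\<kappa> > 0 \<and> IK0 (R * \<kappa>) = y)" for \<kappa>
    by (simp add: IK0_def mult.commute)
  have "\<exists>!\<kappa>. \<kappa> > 0 \<and> besselK0 (\<kappa> * R) * besselI0 (\<kappa> * R) = y"
    unfolding equation
  proof (rule ex1I[of _ "z / R"])
    show "z / R > 0 \<and> IK0 (R * (z / R)) = y"
      using z R by simp
    show "\<kappa> = z / R" if "\<kappa> > 0 \<and> IK0 (R * \<kappa>) = y" for \<kappa>
      using IK0_inj[of "R * \<kappa>" z] that z R by (simp add: field_simps)
  qed
  from theI'[OF this] show "kappa0 \<alpha> \<beta> R > 0" "IK0 (R * kappa0 \<alpha> \<beta> R) = 1 / ((\<alpha> + \<beta>) * R)"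
    unfolding kappa0_def y_def[symmetric] equation by (auto simp: y_def)
qed

section \<open>The sign of t_0\<close>

lemma
  fixes \<alpha> \<beta> R :: real
  assumes \<alpha>: "\<alpha> > 0" and \<beta>: "\<beta> > 0" and R: "R > 0"
  defines "z \<equiv> R * kappa0 \<alpha> \<beta> R" and "p \<equiv> 1 / ((\<alpha> + \<beta>) * R)"
  shows t0_neg_iff: "t0 \<alpha> \<beta> R < 0 \<longleftrightarrow> 0 < p * (1 - \<beta> * R) + z * deriv IK0 z"
    and t0_pos_iff: "0 < t0 \<alpha> \<beta> R \<longleftrightarrow> p * (1 - \<beta> * R) + z * deriv IK0 z < 0"
proof -
  define \<kappa> where "\<kappa> = kappa0 \<alpha> \<beta> R"
  have \<kappa>: "\<kappa> > 0"
    using kappa0_pos[of \<alpha> \<beta> R] \<alpha> \<beta> R by (simp add: \<kappa>_def)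
  have z_eq: "R * \<kappa> = z"
    by (simp add: z_def \<kappa>_def)
  define N where "N = p * (1 - \<beta> * R) + z * deriv IK0 z"
  define c where "c = 2 * \<kappa> * p * \<alpha> / (R * deriv IK0 z)"
  have "IK0 z = p"
    using IK0_kappa0[of \<alpha> \<beta> R] \<alpha> \<beta> R by (simp add: z_def p_def)
  then have "t0 \<alpha> \<beta> R = 2 * \<kappa> * p * (- \<alpha> * \<beta> * R * p + \<alpha> * \<kappa> * R * deriv IK0 z + \<alpha> * p) / (R * deriv IK0 z)"
    unfolding t0_def Let_def \<kappa>_def[symmetric] z_eq by simp
  also have "- \<alpha> * \<beta> * R * p + \<alpha> * \<kappa> * R * deriv IK0 z + \<alpha> * p = \<alpha> * N"
    by (simp add: N_def flip: z_eq) (simp add: algebra_simps)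
  finally have t0_eq: "t0 \<alpha> \<beta> R = N * c"
    by (simp add: c_def mult_ac)
  have "R * deriv IK0 z < 0"
    using deriv_IK0_neg[of z] \<kappa> R by (simp add: z_def \<kappa>_def mult_pos_neg)
  moreover have "2 * \<kappa> * p * \<alpha> > 0"
    using \<kappa> \<alpha> \<beta> R by (simp add: p_def)
  ultimately have "c < 0"
    by (simp add: c_def divide_pos_neg)
  then show "t0 \<alpha> \<beta> R < 0 \<longleftrightarrow> 0 < p * (1 - \<beta> * R) + z * deriv IK0 z"
    and "0 < t0 \<alpha> \<beta> R \<longleftrightarrow> p * (1 - \<beta> * R) + z * deriv IK0 z < 0"
    by (simp_all add: t0_eq mult_less_0_iff zero_less_mult_iff N_def)
qed

lemma t0_pos_if_large:
  assumes \<alpha>: "\<alpha> > 0" and \<beta>: "\<beta> > 0" and large: "1 \<le> \<beta> * R"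
  shows "0 < t0 \<alpha> \<beta> R"
proof -
  have R: "R > 0"
    using zero_less_mult_pos[of \<beta> R] large \<beta> by linarith
  define z where "z = R * kappa0 \<alpha> \<beta> R"
  have z: "z > 0"
    using kappa0_pos[of \<alpha> \<beta> R] \<alpha> \<beta> R by (simp add: z_def)
  have "1 / ((\<alpha> + \<beta>) * R) * (1 - \<beta> * R) \<le> 0"
    using \<alpha> \<beta> R large by (intro mult_nonneg_nonpos) auto
  moreover have "z * deriv IK0 z < 0"
    using deriv_IK0_neg[OF z] z by (simp add: mult_pos_neg)
  ultimately show ?thesis
    unfolding t0_pos_iff[OF \<alpha> \<beta> R] z_def by linarith
qed

text \<open>Once p = I_0K_0(z) exceeds I_0K_0(1), monotonicity forces z < 1, and then the term
  z (I_0K_0)'(z) \<ge> -I_0(z) \<ge> -I_0(1) is dominated by p/2.\<close>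
lemma t0_neg_if_small:
  assumes \<alpha>: "\<alpha> > 0" and \<beta>: "\<beta> > 0" and R: "R > 0" and small: "2 * \<beta> * R \<le> 1"
    and p_large: "max (IK0 1) (2 * besselI0 1) < 1 / ((\<alpha> + \<beta>) * R)"
  shows "t0 \<alpha> \<beta> R < 0"
proof -
  define z where "z = R * kappa0 \<alpha> \<beta> R"
  define p where "p = 1 / ((\<alpha> + \<beta>) * R)"
  have z: "z > 0"
    using kappa0_pos[of \<alpha> \<beta> R] \<alpha> \<beta> R by (simp add: z_def)
  have IK0_z: "IK0 z = p"
    using IK0_kappa0[of \<alpha> \<beta> R] \<alpha> \<beta> R by (simp add: z_def p_def)
  have "z < 1"
  proof (rule ccontr)
    assume "\<not> z < 1"
    then have "IK0 z \<le> IK0 1"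
      using IK0_strict_antimono[of 1 z] by (cases "z = 1") auto
    then show False
      using IK0_z p_large by (simp add: p_def)
  qed
  then have "- besselI0 1 \<le> z * deriv IK0 z"
    using deriv_IK0_ge[OF z] besselI0_mono[of z 1] z by linarith
  moreover have "p * (1 / 2) \<le> p * (1 - \<beta> * R)"
    using small \<alpha> \<beta> R by (intro mult_left_mono) (auto simp: p_def)
  moreover have "2 * besselI0 1 < p"
    using p_large by (simp add: p_def)
  ultimately show ?thesis
    unfolding t0_neg_iff[OF \<alpha> \<beta> R] z_def[symmetric] p_def[symmetric] by linarith
qed

theorem mainTheorem4:
  fixes \<alpha> \<beta> :: real
  assumes "\<alpha> > 0" and "\<beta> > 0"
  shows "(\<forall>\<^sub>F R in at_right 0. t0 \<alpha> \<beta> R < 0) \<and> (\<forall>\<^sub>F R in at_top. t0 \<alpha> \<beta> R > 0)"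
proof
  have "filterlim (\<lambda>R. 1 / (\<alpha> + \<beta>) * inverse R) at_top (at_right 0)"
    using assms by (intro filterlim_tendsto_pos_mult_at_top[OF tendsto_const _ filterlim_inverse_at_top_right]) simp
  then have "\<forall>\<^sub>F R in at_right 0. max (IK0 1) (2 * besselI0 1) < 1 / (\<alpha> + \<beta>) * inverse R"
    unfolding filterlim_at_top_dense by blast
  then have p_large: "\<forall>\<^sub>F R in at_right 0. max (IK0 1) (2 * besselI0 1) < 1 / ((\<alpha> + \<beta>) * R)"
    by (simp add: divide_inverse mult.commute)
  have "((\<lambda>R. 2 * \<beta> * R) \<longlongrightarrow> 0) (at_right 0)"
    by (auto intro!: tendsto_eq_intros)
  then have small: "\<forall>\<^sub>F R in at_right 0. 2 * \<beta> * R < 1"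
    by (rule order_tendstoD) simp
  show "\<forall>\<^sub>F R in at_right 0. t0 \<alpha> \<beta> R < 0"
    using p_large small eventually_at_right_less[of 0]
    by eventually_elim (use assms in \<open>auto intro!: t0_neg_if_small\<close>)
  show "\<forall>\<^sub>F R in at_top. t0 \<alpha> \<beta> R > 0"
    using eventually_ge_at_top[of "1 / \<beta>"]
    by eventually_elim (use assms in \<open>auto intro!: t0_pos_if_large simp: field_simps\<close>)
qed

end
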